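(* For every $t>0$, $$\int_0^\infty\frac{x}{t^2+x^2}\big(1-\tanh(\pi x)\big)dx=\psi(2t)+\beta(2t)-\log(2t)=\psi(t+\tfrac12)-\log t.$$ In particular $\int_0^\infty\frac{x}{1+x^2}(1-\tanh(\pi x))dx=\psi(3/2)$.
   Context: $\psi=\Gamma'/\Gamma$ is the digamma function and $\beta(x):=\sum_{k=0}^\infty\frac{(-1)^k}{x+k}=\frac12[\psi(\frac{x+1}{2})-\psi(\frac x2)]$ for $x>0$. *)

theory Defs
  imports "HOL-Analysis.Analysis"
begin

definition dbeta :: "real \<Rightarrow> real" where
  "dbeta x = (\<Sum>k. (-1) ^ k / (x + real k))"

end

theory Submission
  imports Defs "HOL-Real_Asymp.Real_Asymp"
begin

(* The Mittag-Leffler expansion tanh (pi x) = sum_k (2x/pi) / (x^2 + (k + 1/2)^2), a consequence of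
   the reflection formula for psi, can be integrated termwise against x / (t^2 + x^2): the k-th term
   contributes 1 / (t + k + 1/2). To reach 1 - tanh (pi x), write 1 as the limit of the rescaled
   partial sums T_{N^2} (N x) of the same series (T_M the M-th partial sum) and integrate
   T_{N^2} (N x) - T_N x instead. This yields
   sum_{k<N^2} 1 / (N t + 1/2 + k) - sum_{k<N} 1 / (t + 1/2 + k), which tends to psi (t + 1/2) - ln t.
   Dominated convergence applies because T_{N^2} (N x) - T_N x compares two Riemann sums of the
   decreasing function s |-> (2x/pi) / (x^2 + s^2) on [0, N], with N nodes resp. one node per unit
   interval, and is therefore bounded by the value 2 / (pi x) at s = 0. Finally, pairing consecutive
   terms of beta gives psi x + beta x = ln 2 + psi ((x + 1) / 2). *)

lemma has_integral_atLeast_antiderivative: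
  fixes f F :: "real \<Rightarrow> real"
  assumes deriv: "\<And>x. x \<ge> a \<Longrightarrow> (F has_real_derivative f x) (at x)"
    and nonneg: "\<And>x. x \<ge> a \<Longrightarrow> f x \<ge> 0"
    and lim: "(F \<longlongrightarrow> l) at_top"
  shows "(f has_integral (l - F a)) {a..}"
proof (rule has_integral_to_inf)
  have FTC: "(f has_integral (F y - F a)) {a..y}" if "a \<le> y" for y
    using that deriv
    by (intro fundamental_theorem_of_calculus)
       (auto simp: has_real_derivative_iff_has_vector_derivative[symmetric] intro: has_field_derivative_at_within)
  show "f integrable_on {a..y}" for y
    using FTC by (cases "a \<le> y") auto
  have "\<forall>\<^sub>F y in at_top. F y - F a = integral {a..y} f"
    using eventually_ge_at_top[of a] by eventually_elim (simp add: integral_unique[OF FTC])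
  then show "((\<lambda>y. integral {a..y} f) \<longlongrightarrow> l - F a) at_top"
    by (rule Lim_transform_eventually[OF tendsto_diff[OF lim tendsto_const]])
qed (use nonneg in auto)

lemma tendsto_arctan_div_at_top:
  assumes "c > 0"
  shows "((\<lambda>x. arctan (x / c)) \<longlongrightarrow> pi / 2) at_top"
  using assms by (intro filterlim_compose[OF tendsto_arctan_at_top]) real_asymp

lemma has_real_derivative_arctan_div:
  assumes "c > 0"
  shows "((\<lambda>x. arctan (x / c)) has_real_derivative c / (c\<^sup>2 + x\<^sup>2)) (at x)"
proof -
  have "1 / (1 + (x / c)\<^sup>2) * (1 / c) = c / (c\<^sup>2 + x\<^sup>2)"
    using assms by (simp add: field_simps power2_eq_square add_pos_nonneg)
  then show ?thesis
    using assms by (auto intro!: derivative_eq_intros simp: inverse_eq_divide)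
qed

lemma has_integral_inverse_sum_squares:
  fixes t :: real
  assumes t: "t > 0"
  shows "((\<lambda>x. 1 / (t\<^sup>2 + x\<^sup>2)) has_integral pi / (2 * t)) {0..}"
proof -
  have "((\<lambda>x. arctan (x / t) / t) has_real_derivative t / (t\<^sup>2 + x\<^sup>2) / t) (at x)" for x
    by (intro DERIV_cdivide has_real_derivative_arctan_div t)
  moreover have "t / (t\<^sup>2 + x\<^sup>2) / t = 1 / (t\<^sup>2 + x\<^sup>2)" for x
    using t by simp
  ultimately have "((\<lambda>x. arctan (x / t) / t) has_real_derivative 1 / (t\<^sup>2 + x\<^sup>2)) (at x)" for x
    by metis
  moreover have "((\<lambda>x. arctan (x / t) / t) \<longlongrightarrow> pi / 2 / t) at_top"
    using t by (intro tendsto_divide tendsto_const tendsto_arctan_div_at_top) auto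
  ultimately have "((\<lambda>x. 1 / (t\<^sup>2 + x\<^sup>2)) has_integral (pi / 2 / t - arctan (0 / t) / t)) {0..}"
    by (intro has_integral_atLeast_antiderivative) (auto simp: add_pos_nonneg)
  then show ?thesis
    by simp
qed

lemma sum_lessThan_mult_nat:
  fixes g :: "nat \<Rightarrow> 'a :: comm_monoid_add"
  shows "(\<Sum>k<m * n. g k) = (\<Sum>j<m. \<Sum>i<n. g (j * n + i))"
proof (induction m)
  case (Suc m)
  have "(\<Sum>k<Suc m * n. g k) = (\<Sum>k<m * n. g k) + (\<Sum>k\<in>{m * n..<m * n + n}. g k)"
    by (simp add: add.commute sum.atLeastLessThan_concat[symmetric] atLeast0LessThan[symmetric])
  also have "(\<Sum>k\<in>{m * n..<m * n + n}. g k) = (\<Sum>i<n. g (m * n + i))"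
    using sum.shift_bounds_nat_ivl[of g 0 "m * n" n] by (simp add: atLeast0LessThan add.commute)
  finally show ?case
    using Suc by simp
qed simp

lemma ln_Suc_diff_bounds:
  fixes y :: real
  assumes y: "y > 0"
  shows "1 / (y + 1) \<le> ln (y + 1) - ln y" and "ln (y + 1) - ln y \<le> 1 / y"
proof -
  have "ln (y / (y + 1)) \<le> y / (y + 1) - 1"
    using y by (intro ln_le_minus_one) simp
  moreover have "y / (y + 1) - 1 = - (1 / (y + 1))" "ln (y / (y + 1)) = ln y - ln (y + 1)"
    using y by (simp_all add: field_simps ln_div)
  ultimately show "1 / (y + 1) \<le> ln (y + 1) - ln y"
    by linarith
  have "ln (1 + 1 / y) \<le> 1 / y"
    using y by (intro ln_add_one_self_le_self) simp
  moreover have "ln (1 + 1 / y) = ln (y + 1) - ln y"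
    using y by (simp add: field_simps ln_div)
  ultimately show "ln (y + 1) - ln y \<le> 1 / y"
    by simp
qed

lemma sum_inverse_ln_bounds:
  fixes z :: real
  assumes z: "z > 0"
  shows "ln (z + M) - ln z \<le> (\<Sum>k<M. inverse (z + real k))"
    and "(\<Sum>k<M. inverse (z + real k)) \<le> 1 / z + (ln (z + M) - ln z)"
proof -
  have telescope: "(\<Sum>k<M. ln (z + real k + 1) - ln (z + real k)) = ln (z + M) - ln z"
    using sum_lessThan_telescope[of "\<lambda>k. ln (z + real k)" M] by (simp add: add_ac)
  have pos: "z + real k > 0" for k
    using z by simp
  show "ln (z + M) - ln z \<le> (\<Sum>k<M. inverse (z + real k))"
    unfolding telescope[symmetric]
    by (intro sum_mono) (use ln_Suc_diff_bounds(2)[OF pos] in \<open>simp add: inverse_eq_divide\<close>)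
  have "(\<Sum>k<M. inverse (z + real k)) - (\<Sum>k<M. inverse (z + real k + 1)) = 1 / z - 1 / (z + M)"
    using sum_lessThan_telescope'[of "\<lambda>k. inverse (z + real k)" M]
    by (simp add: sum_subtractf add_ac inverse_eq_divide)
  moreover have "(\<Sum>k<M. inverse (z + real k + 1)) \<le> ln (z + M) - ln z"
    unfolding telescope[symmetric]
    by (intro sum_mono) (use ln_Suc_diff_bounds(1)[OF pos] in \<open>simp add: inverse_eq_divide\<close>)
  moreover have "1 / (z + M) \<ge> 0"
    using z by simp
  ultimately show "(\<Sum>k<M. inverse (z + real k)) \<le> 1 / z + (ln (z + M) - ln z)"
    by linarith
qed

lemma LIMSEQ_sum_inverse_minus_ln:
  fixes t :: real
  assumes t: "t > 0"
  shows "(\<lambda>N. (\<Sum>k<N * N. inverse (real N * t + 1/2 + real k)) - ln N) \<longlonglongrightarrow> - ln t"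
proof (rule tendsto_sandwich)
  have pos: "real N * t + 1/2 > 0" for N
    using t by (simp add: add_nonneg_pos)
  show "\<forall>\<^sub>F N in sequentially. ln (real N * t + 1/2 + real (N * N)) - ln (real N * t + 1/2) - ln N
      \<le> (\<Sum>k<N * N. inverse (real N * t + 1/2 + real k)) - ln N"
  proof (intro always_eventually allI)
    fix N
    show "ln (real N * t + 1/2 + real (N * N)) - ln (real N * t + 1/2) - ln N
        \<le> (\<Sum>k<N * N. inverse (real N * t + 1/2 + real k)) - ln N"
      using sum_inverse_ln_bounds(1)[OF pos[of N], of "N * N"] by simp
  qed
  show "\<forall>\<^sub>F N in sequentially. (\<Sum>k<N * N. inverse (real N * t + 1/2 + real k)) - ln N
      \<le> 1 / (real N * t + 1/2) + (ln (real N * t + 1/2 + real (N * N)) - ln (real N * t + 1/2)) - ln N"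
  proof (intro always_eventually allI)
    fix N
    show "(\<Sum>k<N * N. inverse (real N * t + 1/2 + real k)) - ln N
        \<le> 1 / (real N * t + 1/2) + (ln (real N * t + 1/2 + real (N * N)) - ln (real N * t + 1/2)) - ln N"
      using sum_inverse_ln_bounds(2)[OF pos[of N], of "N * N"] by simp
  qed
  show "(\<lambda>N. ln (real N * t + 1/2 + real (N * N)) - ln (real N * t + 1/2) - ln N) \<longlonglongrightarrow> - ln t"
    using t by real_asymp
  show "(\<lambda>N. 1 / (real N * t + 1/2) + (ln (real N * t + 1/2 + real (N * N)) - ln (real N * t + 1/2))
      - ln N) \<longlonglongrightarrow> - ln t"
    using t by real_asymp
qed

lemma Digamma_reflection_complex:
  fixes z :: complex
  assumes z: "z \<notin> \<int>"
  shows "Digamma (1 - z) - Digamma z = of_real pi * cot (of_real pi * z)"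
proof -
  define g where "g w = Gamma w * Gamma (1 - w) * sin (of_real pi * w)" for w :: complex
  have "eventually (\<lambda>w. w \<in> UNIV - \<int>) (nhds z)"
    using z by (intro eventually_nhds_in_open) (auto simp: open_Diff)
  then have "eventually (\<lambda>w. g w = of_real pi) (nhds z)"
  proof eventually_elim
    case (elim w)
    then have "sin (of_real pi * w) \<noteq> 0" by (subst sin_eq_0) auto
    then show ?case
      unfolding g_def using Gamma_reflection_complex[of w] by (simp add: field_simps)
  qed
  then have g0: "(g has_field_derivative 0) (at z)"
    by (subst DERIV_cong_ev[OF refl _ refl]) (auto intro: DERIV_const)
  have z': "z \<notin> \<int>\<^sub>\<le>\<^sub>0" "1 - z \<notin> \<int>\<^sub>\<le>\<^sub>0"
    using z Ints_diff[of 1 "1 - z"] nonpos_Ints_subset_Ints by auto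
  have "(g has_field_derivative Gamma z * Gamma (1 - z) *
      ((Digamma z - Digamma (1 - z)) * sin (of_real pi * z) + of_real pi * cos (of_real pi * z))) (at z)"
    unfolding g_def using z' by (auto intro!: derivative_eq_intros simp: algebra_simps)
  from DERIV_unique[OF this g0] z' have
    "(Digamma z - Digamma (1 - z)) * sin (of_real pi * z) + of_real pi * cos (of_real pi * z) = 0"
    by (simp add: Gamma_eq_zero_iff)
  moreover have "sin (of_real pi * z) \<noteq> 0"
    using z by (subst sin_eq_0) auto
  ultimately show ?thesis
    by (simp add: cot_def field_simps)
qed

lemma Digamma_diff_sums:
  fixes z w :: "'a :: {real_normed_field,banach}"
  assumes "z \<noteq> 0" "w \<noteq> 0"
  shows "(\<lambda>k. inverse (w + of_nat k) - inverse (z + of_nat k)) sums (Digamma z - Digamma w)"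
proof -
  have "(\<lambda>k. inverse (of_nat (Suc k)) - inverse (u + of_nat k)) sums (Digamma u + euler_mascheroni)"
    if "u \<noteq> 0" for u :: 'a
    using summable_Digamma[OF that] by (simp add: Digamma_def summable_sums)
  from sums_diff[OF this[OF assms(1)] this[OF assms(2)]] show ?thesis
    by simp
qed

lemma tanh_of_real: "tanh (of_real r :: 'a :: {real_normed_field,banach}) = of_real (tanh r)"
  by (simp add: tanh_def sinh_def cosh_def exp_of_real scaleR_conv_of_real flip: of_real_minus)

lemma cot_pi_half_plus_i_times:
  "cot (of_real pi * (1/2 + \<i> * of_real y)) = - \<i> * of_real (tanh (pi * y))"
proof -
  have "of_real pi * (1/2 + \<i> * of_real y) = of_real (pi / 2) + \<i> * of_real (pi * y)"
    by (simp add: algebra_simps)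
  moreover have "sin (complex_of_real (pi / 2)) = 1" "cos (complex_of_real (pi / 2)) = 0"
    by (simp_all flip: sin_of_real cos_of_real)
  ultimately have "cot (of_real pi * (1/2 + \<i> * of_real y)) = - tan (\<i> * of_real (pi * y))"
    by (simp add: cot_def tan_def sin_add cos_add)
  also have "\<dots> = - \<i> * tanh (of_real (pi * y))"
    by (simp add: tanh_conv_tan)
  finally show ?thesis
    by (simp only: tanh_of_real)
qed

definition tanh_term :: "real \<Rightarrow> real \<Rightarrow> real" where
  "tanh_term s x = (2 * x / pi) / (x\<^sup>2 + s\<^sup>2)"

lemma tanh_term_nonneg: "x \<ge> 0 \<Longrightarrow> tanh_term s x \<ge> 0"
  by (simp add: tanh_term_def)

lemma tanh_term_antimono:
  assumes "x \<ge> 0" "0 \<le> s" "s \<le> s'"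
  shows "tanh_term s' x \<le> tanh_term s x"
proof (cases "x = 0")
  case False
  with assms show ?thesis unfolding tanh_term_def
    by (intro divide_left_mono add_left_mono power_mono) (auto intro!: mult_pos_pos add_pos_nonneg)
qed (simp add: tanh_term_def)

lemma tanh_term_scale:
  assumes "c > 0"
  shows "tanh_term a (c * x) = tanh_term (a / c) x / c"
proof -
  have "x\<^sup>2 + (a / c)\<^sup>2 = ((c * x)\<^sup>2 + a\<^sup>2) / c\<^sup>2"
    using assms by (simp add: field_simps power2_eq_square)
  then show ?thesis
    using assms unfolding tanh_term_def by (simp add: power2_eq_square)
qed

lemma tanh_term_sums: "(\<lambda>k. tanh_term (real k + 1/2) x) sums tanh (pi * x)"
proof -
  define z where "z = 1/2 + \<i> * complex_of_real x"
  have "z \<notin> \<int>"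
  proof
    assume "z \<in> \<int>"
    then obtain n where "1/2 = real_of_int n"
      by (auto simp: complex_is_Int_iff z_def)
    then have "of_int (2 * n) = (1 :: real)"
      by simp
    then show False
      by presburger
  qed
  then have "z \<noteq> 0" "1 - z \<noteq> 0" by auto
  from Digamma_diff_sums[OF this] have
    "(\<lambda>k. inverse (1 - z + of_nat k) - inverse (z + of_nat k)) sums (Digamma z - Digamma (1 - z))" .
  also have "Digamma z - Digamma (1 - z) = \<i> * of_real pi * of_real (tanh (pi * x))"
    using Digamma_reflection_complex[OF \<open>z \<notin> \<int>\<close>] cot_pi_half_plus_i_times[of x]
    by (simp add: z_def algebra_simps)
  also have "(\<lambda>k. inverse (1 - z + of_nat k) - inverse (z + of_nat k))
      = (\<lambda>k. \<i> * of_real pi * of_real (tanh_term (real k + 1/2) x))"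
  proof
    fix k
    define a where "a = real k + 1/2"
    have "x\<^sup>2 + a\<^sup>2 > 0"
      by (simp add: a_def add_nonneg_pos)
    then have "inverse (Complex a (- x)) - inverse (Complex a x) = \<i> * of_real (2 * x / (x\<^sup>2 + a\<^sup>2))"
      by (simp add: complex_eq_iff inverse_complex.ctr field_simps power2_eq_square)
    moreover have "1 - z + of_nat k = Complex a (- x)" "z + of_nat k = Complex a x"
      by (simp_all add: z_def a_def complex_eq_iff)
    moreover have "\<i> * of_real pi * of_real (tanh_term a x) = \<i> * of_real (2 * x / (x\<^sup>2 + a\<^sup>2))"
      by (simp add: tanh_term_def)
    ultimately show "inverse (1 - z + of_nat k) - inverse (z + of_nat k)
        = \<i> * of_real pi * of_real (tanh_term (real k + 1/2) x)"
      by (simp only: a_def)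
  qed
  finally have "(\<lambda>k. complex_of_real (tanh_term (real k + 1/2) x)) sums of_real (tanh (pi * x))"
    by (subst (asm) sums_mult_iff) simp_all
  then show ?thesis
    by (simp only: sums_of_real_iff)
qed

lemma DERIV_weighted_tanh_term_diagonal:
  assumes t: "t > 0"
  shows "((\<lambda>x. (arctan (x / t) / t - x / (t\<^sup>2 + x\<^sup>2)) / pi) has_real_derivative
    x / (t\<^sup>2 + x\<^sup>2) * tanh_term t x) (at x)"
proof -
  have pos: "t\<^sup>2 + x\<^sup>2 > 0"
    using t by (simp add: add_pos_nonneg)
  have "((\<lambda>x. x / (t\<^sup>2 + x\<^sup>2)) has_real_derivative (t\<^sup>2 - x\<^sup>2) / (t\<^sup>2 + x\<^sup>2)\<^sup>2) (at x)"
    using t by (auto intro!: derivative_eq_intros simp: add_pos_nonneg power2_eq_square)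
  then have "((\<lambda>x. (arctan (x / t) / t - x / (t\<^sup>2 + x\<^sup>2)) / pi) has_real_derivative
      (t / (t\<^sup>2 + x\<^sup>2) / t - (t\<^sup>2 - x\<^sup>2) / (t\<^sup>2 + x\<^sup>2)\<^sup>2) / pi) (at x)"
    by (intro DERIV_cdivide DERIV_diff has_real_derivative_arctan_div t)
  moreover have "t / (t\<^sup>2 + x\<^sup>2) / t - (t\<^sup>2 - x\<^sup>2) / (t\<^sup>2 + x\<^sup>2)\<^sup>2 = 2 * x\<^sup>2 / (t\<^sup>2 + x\<^sup>2)\<^sup>2"
    using t pos by (simp add: power2_eq_square diff_divide_distrib[symmetric] divide_simps)
  moreover have "2 * x\<^sup>2 / (t\<^sup>2 + x\<^sup>2)\<^sup>2 / pi = x / (t\<^sup>2 + x\<^sup>2) * tanh_term t x"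
    unfolding tanh_term_def by (simp add: add.commute power2_eq_square mult_ac)
  ultimately show ?thesis
    by simp
qed

lemma DERIV_weighted_tanh_term:
  assumes t: "t > 0" and s: "s > 0" and st: "s\<^sup>2 - t\<^sup>2 \<noteq> 0"
  shows "((\<lambda>x. 2 * (s * arctan (x / s) - t * arctan (x / t)) / (pi * (s\<^sup>2 - t\<^sup>2))) has_real_derivative
    x / (t\<^sup>2 + x\<^sup>2) * tanh_term s x) (at x)"
proof -
  have D: "((\<lambda>x. 2 * (s * arctan (x / s) - t * arctan (x / t)) / (pi * (s\<^sup>2 - t\<^sup>2))) has_real_derivative
      2 * (s * (s / (s\<^sup>2 + x\<^sup>2)) - t * (t / (t\<^sup>2 + x\<^sup>2))) / (pi * (s\<^sup>2 - t\<^sup>2))) (at x)"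
    by (intro DERIV_cdivide DERIV_cmult DERIV_diff has_real_derivative_arctan_div s t)
  have "s * (s / (s\<^sup>2 + x\<^sup>2)) - t * (t / (t\<^sup>2 + x\<^sup>2))
      = x\<^sup>2 * (s\<^sup>2 - t\<^sup>2) / ((s\<^sup>2 + x\<^sup>2) * (t\<^sup>2 + x\<^sup>2))"
    using s t by (simp add: divide_simps power2_eq_square add_pos_nonneg) (simp add: algebra_simps)
  then have "2 * (s * (s / (s\<^sup>2 + x\<^sup>2)) - t * (t / (t\<^sup>2 + x\<^sup>2))) / (pi * (s\<^sup>2 - t\<^sup>2))
      = 2 * x\<^sup>2 / (pi * ((s\<^sup>2 + x\<^sup>2) * (t\<^sup>2 + x\<^sup>2)))"
    using st by simp
  also have "\<dots> = x / (t\<^sup>2 + x\<^sup>2) * tanh_term s x"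
    unfolding tanh_term_def by (simp add: add.commute power2_eq_square mult_ac)
  finally show ?thesis
    using D by simp
qed

lemma has_integral_weighted_tanh_term:
  assumes t: "t > 0" and s: "s > 0"
  shows "((\<lambda>x. x / (t\<^sup>2 + x\<^sup>2) * tanh_term s x) has_integral 1 / (t + s)) {0..}"
proof (cases "s = t")
  case True
  have lim: "((\<lambda>x. (arctan (x / t) / t - x / (t\<^sup>2 + x\<^sup>2)) / pi) \<longlongrightarrow> (pi / 2 / t - 0) / pi) at_top"
    using t by (intro tendsto_intros tendsto_arctan_div_at_top) (simp_all, real_asymp)
  have "((\<lambda>x. x / (t\<^sup>2 + x\<^sup>2) * tanh_term t x) has_integral
      (pi / 2 / t - 0) / pi - (arctan (0 / t) / t - 0 / (t\<^sup>2 + 0\<^sup>2)) / pi) {0..}"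
    by (rule has_integral_atLeast_antiderivative[OF DERIV_weighted_tanh_term_diagonal[OF t] _ lim])
       (simp add: tanh_term_nonneg)
  then show ?thesis
    using True t by simp
next
  case False
  then have st: "s\<^sup>2 - t\<^sup>2 \<noteq> 0"
    using s t by (simp add: power2_eq_iff)
  have "((\<lambda>x. 2 * (s * arctan (x / s) - t * arctan (x / t)) / (pi * (s\<^sup>2 - t\<^sup>2))) \<longlongrightarrow>
      2 * (s * (pi / 2) - t * (pi / 2)) / (pi * (s\<^sup>2 - t\<^sup>2))) at_top"
    using s t st by (intro tendsto_intros tendsto_arctan_div_at_top) simp_all
  moreover have "2 * (s * (pi / 2) - t * (pi / 2)) / (pi * (s\<^sup>2 - t\<^sup>2)) = 1 / (t + s)"
    using s t st by (simp add: field_simps) (simp add: power2_eq_square algebra_simps)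
  ultimately have lim: "((\<lambda>x. 2 * (s * arctan (x / s) - t * arctan (x / t)) / (pi * (s\<^sup>2 - t\<^sup>2)))
      \<longlongrightarrow> 1 / (t + s)) at_top"
    by simp
  have "((\<lambda>x. x / (t\<^sup>2 + x\<^sup>2) * tanh_term s x) has_integral
      1 / (t + s) - 2 * (s * arctan (0 / s) - t * arctan (0 / t)) / (pi * (s\<^sup>2 - t\<^sup>2))) {0..}"
    by (rule has_integral_atLeast_antiderivative[OF DERIV_weighted_tanh_term[OF t s st] _ lim])
       (simp add: tanh_term_nonneg)
  then show ?thesis
    by simp
qed

definition tanh_psum :: "nat \<Rightarrow> real \<Rightarrow> real" where
  "tanh_psum M x = (\<Sum>k<M. tanh_term (real k + 1/2) x)"

lemma tanh_psum_le_tanh: "x \<ge> 0 \<Longrightarrow> tanh_psum M x \<le> tanh (pi * x)"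
  unfolding tanh_psum_def using tanh_term_sums[of x]
  by (metis sums_iff sum_le_suminf finite_lessThan tanh_term_nonneg)

lemma LIMSEQ_tanh_psum: "(\<lambda>M. tanh_psum M x) \<longlonglongrightarrow> tanh (pi * x)"
  using tanh_term_sums[of x] by (simp add: tanh_psum_def sums_def)

lemma tanh_term_le_telescoping:
  assumes "x \<ge> 0" "n > 0"
  shows "tanh_term (n + 1/2) x \<le> (2 * x / pi) * (1 / n - 1 / (n + 1))"
proof -
  have "tanh_term (n + 1/2) x \<le> (2 * x / pi) / (n * (n + 1))"
    unfolding tanh_term_def
  proof (rule divide_left_mono)
    show "n * (n + 1) \<le> x\<^sup>2 + (n + 1/2)\<^sup>2"
      by (simp add: power2_eq_square algebra_simps add_increasing)
    show "0 < (x\<^sup>2 + (n + 1/2)\<^sup>2) * (n * (n + 1))"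
      using assms by (intro mult_pos_pos add_nonneg_pos) auto
  qed (use assms in simp)
  also have "\<dots> = (2 * x / pi) * (1 / n - 1 / (n + 1))"
    using assms by (simp add: field_simps)
  finally show ?thesis .
qed

lemma tanh_minus_tanh_psum_le:
  assumes x: "x \<ge> 0" and M: "M > 0"
  shows "tanh (pi * x) - tanh_psum M x \<le> (2 * x / pi) / M"
proof -
  have tail: "(\<lambda>k. tanh_term (real (k + M) + 1/2) x) sums (tanh (pi * x) - tanh_psum M x)"
    unfolding tanh_psum_def by (rule sums_split_initial_segment[OF tanh_term_sums])
  have telescoping: "(\<lambda>k. (2 * x / pi) * (1 / real (k + M) - 1 / real (Suc k + M))) sums ((2 * x / pi) / M)"
  proof -
    have "(\<lambda>k. 1 / real (k + M)) \<longlonglongrightarrow> 0"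
      by real_asymp
    from telescope_sums'[OF this] show ?thesis
      using sums_mult[of _ _ "2 * x / pi"] by fastforce
  qed
  have le: "tanh_term (real (k + M) + 1/2) x \<le> (2 * x / pi) * (1 / real (k + M) - 1 / real (Suc k + M))" for k
    using tanh_term_le_telescoping[OF x, of "real (k + M)"] M by (simp add: add_ac)
  from sums_le[OF le tail telescoping] show ?thesis .
qed

lemma has_integral_weighted_tanh_psum:
  assumes t: "t > 0" and c: "c > 0"
  shows "((\<lambda>x. x / (t\<^sup>2 + x\<^sup>2) * tanh_psum M (c * x)) has_integral
      (\<Sum>k<M. inverse (c * t + 1/2 + real k))) {0..}"
proof -
  have "((\<lambda>x. x / (t\<^sup>2 + x\<^sup>2) * tanh_term (real k + 1/2) (c * x)) has_integral
      inverse (c * t + 1/2 + real k)) {0..}" for k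
  proof -
    have "((\<lambda>x. x / (t\<^sup>2 + x\<^sup>2) * tanh_term ((real k + 1/2) / c) x / c) has_integral
        1 / (t + (real k + 1/2) / c) / c) {0..}"
      using t c by (intro has_integral_divide has_integral_weighted_tanh_term) auto
    moreover have "(t + (real k + 1/2) / c) * c = c * t + 1/2 + real k"
      using c by (simp add: field_simps)
    then have "1 / (t + (real k + 1/2) / c) / c = inverse (c * t + 1/2 + real k)"
      by (simp add: inverse_eq_divide)
    ultimately show ?thesis
      using c by (simp add: tanh_term_scale)
  qed
  then show ?thesis
    unfolding tanh_psum_def sum_distrib_left by (intro has_integral_sum) auto
qed

definition one_minus_tanh_approx :: "nat \<Rightarrow> real \<Rightarrow> real" where
  "one_minus_tanh_approx N x = tanh_psum (N * N) (real N * x) - tanh_psum N x"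

lemma one_minus_tanh_approx_blocks:
  assumes "N > 0"
  shows "one_minus_tanh_approx N x =
    (\<Sum>j<N. \<Sum>i<N. (tanh_term (real j + (real i + 1/2) / N) x - tanh_term (real j + 1/2) x) / N)"
proof -
  have "tanh_term (real (j * N + i) + 1/2) (real N * x) = tanh_term (real j + (real i + 1/2) / N) x / N"
    for i j
  proof -
    have "(real (j * N + i) + 1/2) / N = real j + (real i + 1/2) / N"
      using assms by (simp add: field_simps)
    then show ?thesis
      using tanh_term_scale[of "real N"] assms by simp
  qed
  then have "tanh_psum (N * N) (real N * x)
      = (\<Sum>j<N. \<Sum>i<N. tanh_term (real j + (real i + 1/2) / N) x / N)"
    unfolding tanh_psum_def by (simp add: sum_lessThan_mult_nat)
  moreover have "tanh_psum N x = (\<Sum>j<N. \<Sum>i<N. tanh_term (real j + 1/2) x / N)"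
    using assms by (simp add: tanh_psum_def)
  ultimately show ?thesis
    by (simp add: one_minus_tanh_approx_def sum_subtractf diff_divide_distrib)
qed

lemma abs_one_minus_tanh_approx_le:
  assumes x: "x \<ge> 0"
  shows "\<bar>one_minus_tanh_approx N x\<bar> \<le> tanh_term 0 x"
proof (cases "N = 0")
  case True
  then show ?thesis
    using x by (simp add: one_minus_tanh_approx_def tanh_psum_def tanh_term_nonneg)
next
  case False
  define f where "f s = tanh_term s x" for s
  have osc: "\<bar>f u - f v\<bar> \<le> f j - f (j + 1)"
    if "j \<le> u" "u \<le> j + 1" "j \<le> v" "v \<le> j + 1" "j \<ge> 0" for j u v
    using that tanh_term_antimono[OF x, of j u] tanh_term_antimono[OF x, of u "j + 1"]
      tanh_term_antimono[OF x, of j v] tanh_term_antimono[OF x, of v "j + 1"]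
    unfolding f_def by linarith
  have "\<bar>one_minus_tanh_approx N x\<bar> \<le> (\<Sum>j<N. \<Sum>i<N. (f (real j) - f (real j + 1)) / N)"
    unfolding one_minus_tanh_approx_blocks[OF False[unfolded neq0_conv]] f_def[symmetric]
  proof (intro order.trans[OF sum_abs] sum_mono order.trans[OF sum_abs])
    fix j i :: nat assume "i \<in> {..<N}"
    then have "(real i + 1/2) / N \<le> 1"
      using False by (simp add: field_simps)
    then show "\<bar>(f (real j + (real i + 1/2) / N) - f (real j + 1/2)) / N\<bar>
        \<le> (f (real j) - f (real j + 1)) / N"
      unfolding abs_divide abs_of_nat by (intro divide_right_mono osc) auto
  qed
  also have "\<dots> = f 0 - f N"
    using sum_lessThan_telescope'[of "\<lambda>j. f (real j)" N] by (simp add: add.commute)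
  also have "\<dots> \<le> f 0"
    using x by (simp add: f_def tanh_term_nonneg)
  finally show ?thesis
    by (simp add: f_def)
qed

lemma LIMSEQ_one_minus_tanh_approx:
  assumes x: "x > 0"
  shows "(\<lambda>N. one_minus_tanh_approx N x) \<longlonglongrightarrow> 1 - tanh (pi * x)"
  unfolding one_minus_tanh_approx_def
proof (intro tendsto_diff LIMSEQ_tanh_psum)
  show "(\<lambda>N. tanh_psum (N * N) (real N * x)) \<longlonglongrightarrow> 1"
  proof (rule tendsto_sandwich)
    show "\<forall>\<^sub>F N in sequentially. tanh (pi * (real N * x)) - (2 * (real N * x) / pi) / real (N * N)
        \<le> tanh_psum (N * N) (real N * x)"
      using eventually_gt_at_top[of 0]
    proof eventually_elim
      case (elim N)
      then show ?case
        using tanh_minus_tanh_psum_le[of "real N * x" "N * N"] x by simp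
    qed
    show "\<forall>\<^sub>F N in sequentially. tanh_psum (N * N) (real N * x) \<le> 1"
    proof (intro always_eventually allI)
      fix N
      show "tanh_psum (N * N) (real N * x) \<le> 1"
        using tanh_psum_le_tanh[of "real N * x" "N * N"] tanh_real_lt_1[of "pi * (real N * x)"] x
        by simp
    qed
    show "(\<lambda>N. tanh (pi * (real N * x)) - (2 * (real N * x) / pi) / real (N * N)) \<longlonglongrightarrow> 1"
      using x unfolding tanh_real_altdef by real_asymp
  qed simp
qed

lemma has_integral_weighted_one_minus_tanh_approx:
  assumes t: "t > 0" and N: "N > 0"
  shows "((\<lambda>x. x / (t\<^sup>2 + x\<^sup>2) * one_minus_tanh_approx N x) has_integral
      (\<Sum>k<N * N. inverse (real N * t + 1/2 + real k)) - (\<Sum>k<N. inverse (t + 1/2 + real k))) {0..}"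
  using has_integral_diff[OF has_integral_weighted_tanh_psum[OF t, of "real N" "N * N"]
      has_integral_weighted_tanh_psum[OF t, of 1 N]] N
  by (simp add: one_minus_tanh_approx_def right_diff_distrib)

lemma weighted_one_minus_tanh_approx_bound:
  assumes t: "t > 0" and x: "x \<ge> 0"
  shows "\<bar>x / (t\<^sup>2 + x\<^sup>2) * one_minus_tanh_approx N x\<bar> \<le> (2 / pi) / (t\<^sup>2 + x\<^sup>2)"
proof (cases "x = 0")
  case False
  have "\<bar>x / (t\<^sup>2 + x\<^sup>2) * one_minus_tanh_approx N x\<bar> \<le> x / (t\<^sup>2 + x\<^sup>2) * tanh_term 0 x"
    using x abs_one_minus_tanh_approx_le[OF x, of N] unfolding abs_mult by (intro mult_mono) auto
  also have "\<dots> = (2 / pi) / (t\<^sup>2 + x\<^sup>2)"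
    using False by (simp add: tanh_term_def power2_eq_square)
  finally show ?thesis .
qed (use t in simp)

lemma has_integral_weighted_one_minus_tanh:
  assumes t: "t > 0"
  shows "((\<lambda>x. x / (t\<^sup>2 + x\<^sup>2) * (1 - tanh (pi * x))) has_integral Digamma (t + 1/2) - ln t) {0..}"
proof (rule has_integral_dominated_convergence)
  show "((\<lambda>x. x / (t\<^sup>2 + x\<^sup>2) * one_minus_tanh_approx (Suc N) x) has_integral
      (\<Sum>k<Suc N * Suc N. inverse (real (Suc N) * t + 1/2 + real k))
      - (\<Sum>k<Suc N. inverse (t + 1/2 + real k))) {0..}" for N
    by (rule has_integral_weighted_one_minus_tanh_approx[OF t]) simp
  show "(\<lambda>x. (2 / pi) / (t\<^sup>2 + x\<^sup>2)) integrable_on {0..}"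
    using has_integral_mult_right[OF has_integral_inverse_sum_squares[OF t], of "2 / pi"]
    by (auto simp: integrable_on_def)
  show "\<forall>x\<in>{0..}. norm (x / (t\<^sup>2 + x\<^sup>2) * one_minus_tanh_approx (Suc N) x) \<le> (2 / pi) / (t\<^sup>2 + x\<^sup>2)"
    for N using weighted_one_minus_tanh_approx_bound[OF t] by simp
  show "\<forall>x\<in>{0..}. (\<lambda>N. x / (t\<^sup>2 + x\<^sup>2) * one_minus_tanh_approx (Suc N) x)
      \<longlonglongrightarrow> x / (t\<^sup>2 + x\<^sup>2) * (1 - tanh (pi * x))"
  proof
    fix x :: real assume "x \<in> {0..}"
    then consider "x = 0" | "x > 0" by force
    then show "(\<lambda>N. x / (t\<^sup>2 + x\<^sup>2) * one_minus_tanh_approx (Suc N) x)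
      \<longlonglongrightarrow> x / (t\<^sup>2 + x\<^sup>2) * (1 - tanh (pi * x))"
    proof cases
      case 2
      then show ?thesis
        by (intro tendsto_mult tendsto_const LIMSEQ_Suc[OF LIMSEQ_one_minus_tanh_approx])
    qed simp
  qed
  have "(\<lambda>N. ((\<Sum>k<N * N. inverse (real N * t + 1/2 + real k)) - ln N)
      + (ln N - (\<Sum>k<N. inverse (t + 1/2 + real k)))) \<longlonglongrightarrow> - ln t + Digamma (t + 1/2)"
    using Digamma_LIMSEQ[of "t + 1/2"] t
    by (intro tendsto_add LIMSEQ_sum_inverse_minus_ln) simp_all
  then show "(\<lambda>N. (\<Sum>k<Suc N * Suc N. inverse (real (Suc N) * t + 1/2 + real k))
      - (\<Sum>k<Suc N. inverse (t + 1/2 + real k))) \<longlonglongrightarrow> Digamma (t + 1/2) - ln t"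
    by (intro LIMSEQ_Suc) (simp add: algebra_simps)
qed

lemma dbeta_sums:
  assumes x: "x > 0"
  shows "(\<lambda>k. (-1) ^ k / (x + real k)) sums dbeta x"
proof -
  have "(\<lambda>k. 1 / (x + real k)) \<longlonglongrightarrow> 0"
    by real_asymp
  then have "summable (\<lambda>k. (-1) ^ k * (1 / (x + real k)))"
    using x by (intro summable_Leibniz'(1)) (auto intro!: divide_left_mono add_pos_nonneg)
  then show ?thesis
    by (simp add: dbeta_def summable_sums)
qed

lemma sum_alternating_minus_harmonic:
  assumes x: "x > 0"
  shows "(\<Sum>k<m * 2. (-1) ^ k / (x + real k) - inverse (x + real k))
    = - (\<Sum>j<m. inverse ((x + 1) / 2 + real j))"
  unfolding sum_lessThan_mult_nat sum_negf[symmetric]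
proof (rule sum.cong[OF refl])
  fix j
  have pair: "(\<Sum>i<2. g i) = g 0 + g 1" for g :: "nat \<Rightarrow> real"
    by (simp add: numeral_2_eq_2)
  have "(-1 :: real) ^ (j * 2) = 1" "(-1 :: real) ^ (j * 2 + 1) = -1"
    by (simp_all add: neg_one_even_power neg_one_odd_power)
  moreover have "x + 2 * real j + 1 > 0"
    using x by simp
  ultimately show "(\<Sum>i<2. (-1) ^ (j * 2 + i) / (x + real (j * 2 + i)) - inverse (x + real (j * 2 + i)))
      = - inverse ((x + 1) / 2 + real j)"
    unfolding pair by (simp add: inverse_eq_divide field_simps)
qed

lemma Digamma_plus_dbeta:
  assumes x: "x > 0"
  shows "Digamma x + dbeta x = ln 2 + Digamma ((x + 1) / 2)"
proof -
  have "strict_mono (\<lambda>m :: nat. m * 2)"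
    by (simp add: strict_mono_def)
  then have "(\<lambda>m. (ln (real (m * 2)) - (\<Sum>k<m * 2. inverse (x + real k)))
      + (\<Sum>k<m * 2. (-1) ^ k / (x + real k))) \<longlonglongrightarrow> Digamma x + dbeta x"
    using LIMSEQ_subseq_LIMSEQ[OF Digamma_LIMSEQ, of x "\<lambda>m. m * 2"]
      LIMSEQ_subseq_LIMSEQ[OF dbeta_sums[OF x, unfolded sums_def], of "\<lambda>m. m * 2"] x
    by (intro tendsto_add) (simp_all add: o_def)
  moreover have "\<forall>\<^sub>F m in sequentially. (ln (real (m * 2)) - (\<Sum>k<m * 2. inverse (x + real k)))
      + (\<Sum>k<m * 2. (-1) ^ k / (x + real k)) = ln 2 + (ln m - (\<Sum>j<m. inverse ((x + 1) / 2 + real j)))"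
    using eventually_gt_at_top[of 0]
  proof eventually_elim
    case (elim m)
    then have "ln (real (m * 2)) = ln 2 + ln m"
      by (simp add: ln_mult)
    with sum_alternating_minus_harmonic[OF x, of m] show ?case
      by (simp add: sum_subtractf)
  qed
  ultimately have "(\<lambda>m. ln 2 + (ln m - (\<Sum>j<m. inverse ((x + 1) / 2 + real j)))) \<longlonglongrightarrow> Digamma x + dbeta x"
    by (rule Lim_transform_eventually)
  moreover have "(\<lambda>m. ln 2 + (ln m - (\<Sum>j<m. inverse ((x + 1) / 2 + real j)))) \<longlonglongrightarrow> ln 2 + Digamma ((x + 1) / 2)"
    using Digamma_LIMSEQ[of "(x + 1) / 2"] x by (intro tendsto_add tendsto_const) simp_all
  ultimately show ?thesis
    by (rule LIMSEQ_unique)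
qed

theorem mainTheorem7:
  shows "(\<forall>t::real. t > 0 \<longrightarrow>
      ((\<lambda>x. x / (t\<^sup>2 + x\<^sup>2) * (1 - tanh (pi * x))) has_integral
          (Digamma (2 * t) + dbeta (2 * t) - ln (2 * t))) {0..}
    \<and> Digamma (2 * t) + dbeta (2 * t) - ln (2 * t) = Digamma (t + 1/2) - ln t)
   \<and> ((\<lambda>x::real. x / (1 + x\<^sup>2) * (1 - tanh (pi * x))) has_integral Digamma (3/2 :: real)) {0..}"
proof (intro conjI allI impI)
  fix t :: real
  assume t: "t > 0"
  have "(2 * t + 1) / 2 = t + 1/2" and "ln (2 * t) = ln 2 + ln t"
    using t by (simp_all add: ln_mult)
  then show eq: "Digamma (2 * t) + dbeta (2 * t) - ln (2 * t) = Digamma (t + 1/2) - ln t"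
    using Digamma_plus_dbeta[of "2 * t"] t by (simp only:)
  show "((\<lambda>x. x / (t\<^sup>2 + x\<^sup>2) * (1 - tanh (pi * x))) has_integral
      (Digamma (2 * t) + dbeta (2 * t) - ln (2 * t))) {0..}"
    unfolding eq by (rule has_integral_weighted_one_minus_tanh[OF t])
next
  show "((\<lambda>x::real. x / (1 + x\<^sup>2) * (1 - tanh (pi * x))) has_integral Digamma (3/2 :: real)) {0..}"
    using has_integral_weighted_one_minus_tanh[of 1] by (simp add: numeral_eq_Suc)
qed

end
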